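(* Let $m,n,\ell\in\mathbb N$ and $M\in{\rm Mat}_m(\mathbb Z)$. Let $S$ be the set of all vertices of $\Gamma_{M,\,n}$ lying on directed cycles of length dividing $\ell$. Then any $\mathbb Z$-linear combination of vertices from $S$ is a vertex lying on a directed cycle of length dividing $\ell$. Moreover, if $M$ has finite $\mathbb Z_n$-order, then for any ${\bf x}\in S$ and any $s\in\mathbb Z$ with $\gcd(s,n)=1$, the vertices ${\bf x}$ and $s{\bf x}$ lie on directed cycles of equal length.
   Context: $\mathbb N$ is the set of positive integers and $\mathbb Z_n$ the integers modulo $n$. For $M\in{\rm Mat}_m(\mathbb Z)$, the move graph $\Gamma_{M,\,n}$ is the directed graph with vertex set $\mathbb Z_n^m$ and arc set $\{({\bf x},{\bf y}) : {\bf y}^T=M{\bf x}^T \text{ in } \mathbb Z_n^m\}$ (loops allowed). The $\mathbb Z_n$-order of $M$ is the least positive integer $k$ (if it exists) such that $M^k$ acts as the identity on $\mathbb Z_n^m$. A directed cycle is a cycle in the underlying undirected graph such that in the induced directed subgraph on it every vertex has in-degree and out-degree $1$; a loop counts as a directed $1$-cycle and a pair of opposite arcs as a directed $2$-cycle. *)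

theory Defs
  imports "HOL-Analysis.Analysis"
begin

text \<open>The vertex set Z_n^m of the move graph, represented by canonical
  representatives: integer vectors (indexed by a finite type of cardinality m)
  with all entries in {0..n-1}.\<close>
definition vertices :: "nat \<Rightarrow> (int ^ 'm) set" where
  "vertices n = {x. \<forall>i. 0 \<le> x $ i \<and> x $ i < int n}"

definition vred :: "nat \<Rightarrow> int ^ 'm \<Rightarrow> int ^ 'm" where
  "vred n x = (\<chi> i. x $ i mod int n)"

definition move :: "int ^ 'm ^ 'm \<Rightarrow> nat \<Rightarrow> int ^ 'm \<Rightarrow> int ^ 'm" where
  "move M n x = vred n (M *v x)"

definition arc :: "int ^ 'm ^ 'm \<Rightarrow> nat \<Rightarrow> int ^ 'm \<Rightarrow> int ^ 'm \<Rightarrow> bool" where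
  "arc M n x y \<longleftrightarrow> x \<in> vertices n \<and> y \<in> vertices n \<and> y = move M n x"

text \<open>A directed cycle, given as the cyclic list of its (distinct) vertices
  v_0, ..., v_{k-1} with arcs v_i -> v_{i+1 mod k}; in the induced directed
  subgraph every vertex has in-degree and out-degree 1. A loop is a directed
  1-cycle, a pair of opposite arcs a directed 2-cycle.\<close>
definition directed_cycle :: "int ^ 'm ^ 'm \<Rightarrow> nat \<Rightarrow> (int ^ 'm) list \<Rightarrow> bool" where
  "directed_cycle M n c \<longleftrightarrow>
     c \<noteq> [] \<and> distinct c \<and> set c \<subseteq> vertices n \<and>
     (\<forall>i < length c. arc M n (c ! i) (c ! ((i + 1) mod length c))) \<and>
     (\<forall>v \<in> set c. card {w \<in> set c. arc M n v w} = 1 \<and> card {w \<in> set c. arc M n w v} = 1)"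

definition finite_Zn_order :: "int ^ 'm ^ 'm \<Rightarrow> nat \<Rightarrow> bool" where
  "finite_Zn_order M n \<longleftrightarrow> (\<exists>k > 0. \<forall>x \<in> vertices n. (move M n ^^ k) x = x)"

definition cyc_set :: "int ^ 'm ^ 'm \<Rightarrow> nat \<Rightarrow> nat \<Rightarrow> (int ^ 'm) set" where
  "cyc_set M n l = {x \<in> vertices n. \<exists>c. directed_cycle M n c \<and> x \<in> set c \<and> length c dvd l}"

end

theory Submission
  imports Defs "HOL-Number_Theory.Cong" "HOL-Combinatorics.Cycles"
begin

text \<open>Reduction modulo n commutes with M, so the j-th iterate of the move map is the
  reduction of the integer linear map x \<mapsto> M^j x. A vertex lies on a directed cycle
  of length dividing l iff it is fixed by the l-th iterate, the cycle being its orbit.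
  The fixed points of a linear map modulo n are closed under Z-linear combinations.
  For s coprime to n, multiplication by s is invertible modulo n and commutes with M,
  so x and s x are fixed by the same iterates and hence lie on cycles of equal length.\<close>

lemma vred_eq_self [simp]: "x \<in> vertices n \<Longrightarrow> vred n x = x"
  by (simp add: vred_def vertices_def vec_eq_iff)

lemma vred_in_vertices: "n \<ge> 1 \<Longrightarrow> vred n x \<in> vertices n"
  by (simp add: vred_def vertices_def)

lemma vred_smult_cong:
  assumes "c mod int n = d mod int n"
  shows "vred n (c *s x) = vred n (d *s x)"
  using mod_mult_cong[OF assms refl] by (simp add: vred_def vec_eq_iff)

lemma vred_smult_vred: "vred n (c *s vred n x) = vred n (c *s x)"
  by (simp add: vred_def vec_eq_iff mod_mult_right_eq)

lemma vred_lincomb_cong: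
  assumes "\<And>x. x \<in> A \<Longrightarrow> vred n (f x) = vred n (g x)"
  shows "vred n (\<Sum>x\<in>A. a x *s f x) = vred n (\<Sum>x\<in>A. a x *s g x)"
proof -
  have "(\<Sum>x\<in>A. a x * f x $ i) mod int n = (\<Sum>x\<in>A. a x * g x $ i) mod int n" for i
  proof -
    have "(\<Sum>x\<in>A. a x * f x $ i) mod int n
        = (\<Sum>x\<in>A. a x * (f x $ i mod int n) mod int n) mod int n"
      by (simp add: mod_sum_eq mod_mult_right_eq)
    also have "\<dots> = (\<Sum>x\<in>A. a x * (g x $ i mod int n) mod int n) mod int n"
      using assms by (simp add: vred_def vec_eq_iff)
    also have "\<dots> = (\<Sum>x\<in>A. a x * g x $ i) mod int n"
      by (simp add: mod_sum_eq mod_mult_right_eq)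
    finally show ?thesis .
  qed
  then show ?thesis by (simp add: vred_def vec_eq_iff)
qed

lemma vred_matrix_vector_mult_vred: "vred n (M *v vred n x) = vred n (M *v x)"
proof -
  have "(\<Sum>j\<in>UNIV. M $ i $ j * (x $ j mod int n)) mod int n
      = (\<Sum>j\<in>UNIV. M $ i $ j * (x $ j mod int n) mod int n) mod int n" for i
    by (simp add: mod_sum_eq)
  also have "\<dots> i = (\<Sum>j\<in>UNIV. M $ i $ j * x $ j mod int n) mod int n" for i
    by (simp add: mod_mult_right_eq)
  also have "\<dots> i = (\<Sum>j\<in>UNIV. M $ i $ j * x $ j) mod int n" for i
    by (simp add: mod_sum_eq)
  finally show ?thesis
    by (simp add: vred_def vec_eq_iff matrix_vector_mult_def)
qed

lemma matrix_vector_mult_lincomb: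
  fixes A :: "'a::comm_semiring_1 ^ 'n ^ 'm"
  shows "A *v (\<Sum>x\<in>S. a x *s f x) = (\<Sum>x\<in>S. a x *s (A *v f x))"
  by (simp add: vec_eq_iff matrix_vector_mult_def sum_distrib_left mult_ac sum.swap[of _ S])

lemma funpow_matrix_vector_mult_lincomb:
  fixes A :: "'a::comm_semiring_1 ^ 'n ^ 'n"
  shows "((*v) A ^^ j) (\<Sum>x\<in>S. a x *s f x) = (\<Sum>x\<in>S. a x *s ((*v) A ^^ j) (f x))"
  by (induction j) (simp_all add: matrix_vector_mult_lincomb)

lemma move_in_vertices: "n \<ge> 1 \<Longrightarrow> move M n x \<in> vertices n"
  by (simp add: move_def vred_in_vertices)

lemma funpow_move_in_vertices:
  "n \<ge> 1 \<Longrightarrow> x \<in> vertices n \<Longrightarrow> (move M n ^^ j) x \<in> vertices n"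
  by (induction j) (simp_all add: move_in_vertices)

lemma funpow_move_vred: "(move M n ^^ j) (vred n x) = vred n (((*v) M ^^ j) x)"
  by (induction j) (simp_all add: move_def vred_matrix_vector_mult_vred)

lemma funpow_move_fixes_lincomb:
  assumes "A \<subseteq> vertices n" and "\<And>x. x \<in> A \<Longrightarrow> (move M n ^^ j) x = x"
  shows "(move M n ^^ j) (vred n (\<Sum>x\<in>A. a x *s x)) = vred n (\<Sum>x\<in>A. a x *s x)"
proof -
  have "vred n (((*v) M ^^ j) x) = vred n x" if "x \<in> A" for x
    using that assms funpow_move_vred[where M = M and n = n and j = j and x = x] by auto
  then have "vred n (\<Sum>x\<in>A. a x *s ((*v) M ^^ j) x) = vred n (\<Sum>x\<in>A. a x *s x)"
    by (rule vred_lincomb_cong)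
  then show ?thesis
    by (simp add: funpow_move_vred funpow_matrix_vector_mult_lincomb[where f = id, simplified])
qed

definition orbit_cycle :: "('a \<Rightarrow> 'a) \<Rightarrow> 'a list \<Rightarrow> bool" where
  "orbit_cycle f c \<longleftrightarrow>
     c \<noteq> [] \<and> distinct c \<and> (\<forall>i < length c. c ! ((i + 1) mod length c) = f (c ! i))"

lemma orbit_cycle_funpow_nth:
  assumes "orbit_cycle f c" and "i < length c"
  shows "(f ^^ j) (c ! i) = c ! ((i + j) mod length c)"
proof (induction j)
  case 0
  then show ?case using assms(2) by simp
next
  case (Suc j)
  have "(f ^^ Suc j) (c ! i) = f (c ! ((i + j) mod length c))"
    using Suc by simp
  also have "\<dots> = c ! (((i + j) mod length c + 1) mod length c)"
    using assms by (simp add: orbit_cycle_def)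
  also have "\<dots> = c ! ((i + Suc j) mod length c)"
    by (simp add: mod_Suc_eq)
  finally show ?case .
qed

lemma orbit_cycle_funpow_fixes_iff:
  assumes "orbit_cycle f c" and "x \<in> set c"
  shows "(f ^^ j) x = x \<longleftrightarrow> length c dvd j"
proof -
  obtain i where i: "i < length c" "x = c ! i"
    using assms(2) by (auto simp: in_set_conv_nth)
  have "(f ^^ j) x = x \<longleftrightarrow> (i + j) mod length c = i"
    using assms(1) i by (simp add: orbit_cycle_funpow_nth nth_eq_iff_index_eq orbit_cycle_def)
  also have "\<dots> \<longleftrightarrow> [i + j = i + 0] (mod length c)"
    using i(1) by (simp add: cong_def)
  also have "\<dots> \<longleftrightarrow> length c dvd j"
    by (simp only: cong_add_lcancel_nat cong_0_iff)
  finally show ?thesis .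
qed

lemma orbit_cycle_funpow_in_set:
  assumes "orbit_cycle f c" and "x \<in> set c"
  shows "(f ^^ j) x \<in> set c"
proof -
  obtain i where i: "i < length c" "x = c ! i"
    using assms(2) by (auto simp: in_set_conv_nth)
  moreover have "(i + j) mod length c < length c"
    using i(1) by (intro mod_less_divisor) linarith
  ultimately show ?thesis
    using orbit_cycle_funpow_nth[OF assms(1)] by simp
qed

lemma orbit_cycle_image:
  assumes "orbit_cycle f c"
  shows "f ` set c = set c"
proof
  show "f ` set c \<subseteq> set c"
    using orbit_cycle_funpow_in_set[OF assms, of _ 1] by auto
next
  show "set c \<subseteq> f ` set c"
  proof
    fix v assume v: "v \<in> set c"
    have len: "Suc (length c - 1) = length c"
      using v by (cases c) simp_all
    have "(f ^^ Suc (length c - 1)) v = v"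
      unfolding len using orbit_cycle_funpow_fixes_iff[OF assms v] by simp
    then have "v = f ((f ^^ (length c - 1)) v)"
      by (simp del: One_nat_def)
    then show "v \<in> f ` set c"
      using orbit_cycle_funpow_in_set[OF assms v] by (rule image_eqI)
  qed
qed

lemma orbit_cycle_support:
  assumes "(f ^^ k) x = x" and "k > 0"
  shows "orbit_cycle f (support f x)" and "x \<in> set (support f x)"
proof -
  let ?p = "least_power f x" and ?c = "support f x"
  have p: "?p > 0" "(f ^^ ?p) x = x"
    using least_powerI[OF assms] by auto
  have "(f ^^ i) x \<noteq> (f ^^ j) x" if "i < j" "j < ?p" for i j
  proof
    assume eq: "(f ^^ i) x = (f ^^ j) x"
    have "(f ^^ (?p - j + i)) x = (f ^^ (?p - j)) ((f ^^ j) x)"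
      by (simp add: funpow_add eq)
    also have "\<dots> = (f ^^ (?p - j + j)) x"
      by (simp only: funpow_add comp_apply)
    also have "\<dots> = x"
      using p(2) that by simp
    finally have "?p \<le> ?p - j + i"
      using that by (intro least_power_le) auto
    then show False
      using that by linarith
  qed
  then have "inj_on (\<lambda>i. (f ^^ i) x) {0..<?p}"
    by (metis (no_types, lifting) atLeastLessThan_iff inj_onI linorder_neqE_nat)
  then have "distinct ?c"
    by (simp add: distinct_map)
  moreover have "?c ! ((i + 1) mod length ?c) = f (?c ! i)" if "i < length ?c" for i
  proof (cases "i + 1 < ?p")
    case True
    then show ?thesis using that by simp
  next
    case False
    then have last: "i + 1 = ?p" using that by simp
    then have "?c ! ((i + 1) mod length ?c) = x" using p(1) by simp
    also have "x = (f ^^ Suc i) x" using p(2) last by (metis Suc_eq_plus1)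
    also have "\<dots> = f (?c ! i)" using that by simp
    finally show ?thesis .
  qed
  ultimately show "orbit_cycle f ?c"
    using p(1) by (simp add: orbit_cycle_def)
  show "x \<in> set ?c"
    using p(1) by force
qed

lemma directed_cycle_orbit_cycle:
  "directed_cycle M n c \<Longrightarrow> orbit_cycle (move M n) c"
  by (simp add: directed_cycle_def orbit_cycle_def arc_def)

lemma directed_cycle_funpow_fixes_iff:
  "directed_cycle M n c \<Longrightarrow> x \<in> set c \<Longrightarrow> (move M n ^^ j) x = x \<longleftrightarrow> length c dvd j"
  by (simp add: directed_cycle_orbit_cycle orbit_cycle_funpow_fixes_iff)

lemma directed_cycleI:
  assumes "n \<ge> 1" and sub: "set c \<subseteq> vertices n" and orbit: "orbit_cycle (move M n) c"
  shows "directed_cycle M n c"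
proof -
  have img: "move M n ` set c = set c"
    using orbit_cycle_image[OF orbit] .
  then have inj: "inj_on (move M n) (set c)"
    by (intro eq_card_imp_inj_on) simp_all
  have "arc M n (c ! i) (c ! ((i + 1) mod length c))" if "i < length c" for i
    using sub orbit that move_in_vertices[OF assms(1)] by (auto simp: arc_def orbit_cycle_def)
  moreover have "{w \<in> set c. arc M n v w} = {move M n v}" if "v \<in> set c" for v
    using sub img that by (auto simp: arc_def)
  moreover have "\<exists>u. {w \<in> set c. arc M n w v} = {u}" if v: "v \<in> set c" for v
  proof -
    obtain u where "u \<in> set c" "move M n u = v"
      using img v by force
    then have "{w \<in> set c. arc M n w v} = {u}"
      using sub inj v by (auto simp: arc_def inj_on_def)
    then show ?thesis ..
  qed
  ultimately show ?thesis
    using sub orbit by (fastforce simp: directed_cycle_def orbit_cycle_def)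
qed

lemma periodic_vertex_on_directed_cycle:
  assumes "n \<ge> 1" and "x \<in> vertices n" and "k > 0" and "(move M n ^^ k) x = x"
  shows "\<exists>c. directed_cycle M n c \<and> x \<in> set c \<and> length c dvd k"
proof -
  let ?c = "support (move M n) x"
  have orbit: "orbit_cycle (move M n) ?c" and x: "x \<in> set ?c"
    using orbit_cycle_support[OF assms(4,3)] by auto
  have "set ?c \<subseteq> vertices n"
    using funpow_move_in_vertices[OF assms(1,2)] by auto
  then have "directed_cycle M n ?c"
    using directed_cycleI[OF assms(1) _ orbit] by blast
  moreover have "length ?c dvd k"
    using orbit_cycle_funpow_fixes_iff[OF orbit x] assms(4) by simp
  ultimately show ?thesis
    using x by blast
qed

lemma cyc_set_iff:
  assumes "n \<ge> 1" and "l \<ge> 1"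
  shows "x \<in> cyc_set M n l \<longleftrightarrow> x \<in> vertices n \<and> (move M n ^^ l) x = x"
proof
  assume "x \<in> cyc_set M n l"
  then obtain c where "x \<in> vertices n" "directed_cycle M n c" "x \<in> set c" "length c dvd l"
    by (auto simp: cyc_set_def)
  then show "x \<in> vertices n \<and> (move M n ^^ l) x = x"
    by (simp add: directed_cycle_funpow_fixes_iff)
next
  assume x: "x \<in> vertices n \<and> (move M n ^^ l) x = x"
  have "l > 0"
    using assms(2) by simp
  then show "x \<in> cyc_set M n l"
    using x periodic_vertex_on_directed_cycle[OF assms(1)] by (auto simp: cyc_set_def)
qed

lemma vred_lincomb_in_cyc_set:
  assumes "n \<ge> 1" and "l \<ge> 1" and "A \<subseteq> cyc_set M n l"
  shows "vred n (\<Sum>x\<in>A. a x *s x) \<in> cyc_set M n l"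
proof -
  have "A \<subseteq> vertices n" and "\<And>x. x \<in> A \<Longrightarrow> (move M n ^^ l) x = x"
    using assms(3) cyc_set_iff[OF assms(1,2)] by auto
  then show ?thesis
    using funpow_move_fixes_lincomb vred_in_vertices[OF assms(1)] cyc_set_iff[OF assms(1,2)]
    by blast
qed

lemma directed_cycle_through_smult:
  assumes "n \<ge> 1" and c: "directed_cycle M n c" "x \<in> set c" and "gcd s (int n) = 1"
  shows "\<exists>c'. directed_cycle M n c' \<and> vred n (s *s x) \<in> set c' \<and> length c' = length c"
proof -
  have x: "x \<in> vertices n"
    using c by (auto simp: directed_cycle_def)
  have smult_fixed: "(move M n ^^ j) (vred n (t *s z)) = vred n (t *s z)"
    if "z \<in> vertices n" and "(move M n ^^ j) z = z" for t z j
    using funpow_move_fixes_lincomb[where A = "{z}" and a = "\<lambda>_. t"] that by simp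
  obtain u where u: "[s * u = 1] (mod int n)"
    using cong_solve_coprime_int[of s "int n"] assms(4) by (auto simp: coprime_iff_gcd_eq_1)
  define y where "y = vred n (s *s x)"
  have y: "y \<in> vertices n"
    unfolding y_def by (rule vred_in_vertices[OF assms(1)])
  have "length c > 0"
    using c by (auto simp: directed_cycle_def)
  moreover have "(move M n ^^ length c) y = y"
    unfolding y_def using smult_fixed x directed_cycle_funpow_fixes_iff[OF c] by simp
  ultimately obtain c' where c': "directed_cycle M n c'" "y \<in> set c'" "length c' dvd length c"
    using periodic_vertex_on_directed_cycle[OF assms(1) y] by blast
  have "vred n (u *s y) = vred n ((u * s) *s x)"
    by (simp add: y_def vred_smult_vred vector_smult_assoc)
  also have "\<dots> = vred n (1 *s x)"
    using u by (intro vred_smult_cong) (simp add: cong_def mult.commute)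
  also have "\<dots> = x"
    using x by simp
  finally have "(move M n ^^ length c') x = x"
    using smult_fixed[OF y, of "length c'" u] directed_cycle_funpow_fixes_iff[OF c'(1,2)] by simp
  then have "length c dvd length c'"
    using directed_cycle_funpow_fixes_iff[OF c] by simp
  then show ?thesis
    using c' dvd_antisym unfolding y_def by blast
qed

theorem proposition3p2:
  fixes M :: "int ^ 'm ^ 'm" and n l :: nat
  assumes "n \<ge> 1" and "l \<ge> 1"
  shows "(\<forall>(A :: (int ^ 'm) set) (a :: int ^ 'm \<Rightarrow> int).
            finite A \<longrightarrow> A \<subseteq> cyc_set M n l \<longrightarrow>
            vred n (\<Sum>x\<in>A. a x *s x) \<in> cyc_set M n l)
       \<and> (finite_Zn_order M n \<longrightarrow>
            (\<forall>x \<in> cyc_set M n l. \<forall>s :: int. gcd s (int n) = 1 \<longrightarrow>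
              (\<exists>c1 c2. directed_cycle M n c1 \<and> directed_cycle M n c2 \<and>
                 x \<in> set c1 \<and> vred n (s *s x) \<in> set c2 \<and> length c1 = length c2)))"
proof (intro conjI allI impI ballI)
  fix A :: "(int ^ 'm) set" and a :: "int ^ 'm \<Rightarrow> int"
  assume "A \<subseteq> cyc_set M n l"
  then show "vred n (\<Sum>x\<in>A. a x *s x) \<in> cyc_set M n l"
    by (rule vred_lincomb_in_cyc_set[OF assms])
next
  fix x s
  assume "x \<in> cyc_set M n l" and coprime: "gcd s (int n) = 1"
  then obtain c where "directed_cycle M n c" "x \<in> set c"
    by (auto simp: cyc_set_def)
  then show "\<exists>c1 c2. directed_cycle M n c1 \<and> directed_cycle M n c2 \<and>
      x \<in> set c1 \<and> vred n (s *s x) \<in> set c2 \<and> length c1 = length c2"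
    using directed_cycle_through_smult[OF assms(1) _ _ coprime] by metis
qed

end
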